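(* There exist a universal constant $c>0$ and a family of weighted graphs, with arbitrarily large number $n$ of vertices, such that (1) all edge weights equal $1/2$; (2) $\mathsf{OPT}^{\mathsf{IR}}=O(1)$; (3) every persuasive binary signaling scheme has cost at least $c\,n$.
   Context: Setting. $V$ is a finite set of $n$ task types and $W=(W_{u,v})_{u,v\in V}$ is a symmetric matrix with entries in $[0,1]$ and $W_{v,v}=1$; edges are pairs $\{u,v\}$, $u\ne v$, with $W_{u,v}>0$, of weight $W_{u,v}$. A vector $\theta\in\mathbb{R}_{\ge0}^V$ is feasible if $W\theta\ge\mathbf 1$ coordinatewise. $\mathsf{OPT}^{\mathsf{IR}}=\min\{\|\theta\|_1:\theta\in[0,1]^V\text{ feasible}\}$. Signaling. There are $n$ agents; the type profile $t$ is a uniformly random bijection $[n]\to V$. A signaling scheme with finite signal space $\Sigma\subset[0,1]$ is a map $\varphi$ assigning to each bijection $t$ a distribution $\varphi(t)$ on $\Sigma^V$; given $t$, $s\sim\varphi(t)$ is drawn and agent $i$ privately receives $s_{t_i}$. For agent $i$, a signal $\theta\in\Sigma$ with $\Pr[s_{t_i}=\theta]>0$ and $x\ge0$, let $Q_i(x\mid\theta)=\mathbb{E}\big[x+\sum_{v'\neq t_i}W_{t_i,v'}s_{v'}\,\big|\,s_{t_i}=\theta\big]$. The scheme is persuasive if for every agent $i$ and every such $\theta$: $Q_i(\theta\mid\theta)\ge1$ and $\theta=\min\{x\ge0:Q_i(x\mid\theta)\ge1\}$. Its cost is $\mathbb{E}[\|s\|_1]$. Binary means $|\Sigma|=2$.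 *)

theory Defs
  imports "HOL-Probability.Probability" "HOL-Combinatorics.Permutations"
begin

text \<open>Vertex (task type) set V = {..<n}; agents [n] = {..<n}.
  A weight matrix is W :: nat => nat => real, only entries on {..<n} matter.\<close>

definition weighted_graph :: "nat \<Rightarrow> (nat \<Rightarrow> nat \<Rightarrow> real) \<Rightarrow> bool" where
  "weighted_graph n W \<longleftrightarrow>
     (\<forall>u<n. \<forall>v<n. W u v = W v u \<and> 0 \<le> W u v \<and> W u v \<le> 1) \<and> (\<forall>v<n. W v v = 1)"

definition half_edge_weights :: "nat \<Rightarrow> (nat \<Rightarrow> nat \<Rightarrow> real) \<Rightarrow> bool" where
  "half_edge_weights n W \<longleftrightarrow> (\<forall>u<n. \<forall>v<n. u \<noteq> v \<longrightarrow> W u v > 0 \<longrightarrow> W u v = 1/2)"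

definition feasible :: "nat \<Rightarrow> (nat \<Rightarrow> nat \<Rightarrow> real) \<Rightarrow> (nat \<Rightarrow> real) \<Rightarrow> bool" where
  "feasible n W \<theta> \<longleftrightarrow> (\<forall>v<n. \<theta> v \<ge> 0) \<and> (\<forall>u<n. (\<Sum>v<n. W u v * \<theta> v) \<ge> 1)"

definition OPT_IR :: "nat \<Rightarrow> (nat \<Rightarrow> nat \<Rightarrow> real) \<Rightarrow> real" where
  "OPT_IR n W = Inf {(\<Sum>v<n. \<theta> v) | \<theta>. (\<forall>v<n. \<theta> v \<in> {0..1}) \<and> feasible n W \<theta>}"

text \<open>Type profiles: uniformly random bijections [n] -> V, represented canonically
  as permutations of {..<n}.\<close>
definition profiles :: "nat \<Rightarrow> (nat \<Rightarrow> nat) set" where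
  "profiles n = {t. t permutes {..<n}}"

definition signaling_scheme :: "nat \<Rightarrow> real set \<Rightarrow> ((nat \<Rightarrow> nat) \<Rightarrow> (nat \<Rightarrow> real) pmf) \<Rightarrow> bool" where
  "signaling_scheme n Sig \<phi> \<longleftrightarrow> finite Sig \<and> Sig \<subseteq> {0..1} \<and>
     (\<forall>t\<in>profiles n. set_pmf (\<phi> t) \<subseteq> PiE {..<n} (\<lambda>_. Sig))"

definition binary :: "real set \<Rightarrow> bool" where
  "binary Sig \<longleftrightarrow> card Sig = 2"

definition joint :: "nat \<Rightarrow> ((nat \<Rightarrow> nat) \<Rightarrow> (nat \<Rightarrow> real) pmf) \<Rightarrow> ((nat \<Rightarrow> nat) \<times> (nat \<Rightarrow> real)) pmf" where
  "joint n \<phi> = bind_pmf (pmf_of_set (profiles n)) (\<lambda>t. map_pmf (\<lambda>s. (t, s)) (\<phi> t))"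

definition sig_event :: "nat \<Rightarrow> real \<Rightarrow> ((nat \<Rightarrow> nat) \<times> (nat \<Rightarrow> real)) set" where
  "sig_event i th = {(t, s). s (t i) = th}"

text \<open>Q_i(x | th) = E[x + sum_{v' ~= t_i} W_{t_i,v'} s_{v'} | s_{t_i} = th], the conditional
  expectation on an event of positive probability, written as E[X 1_A] / P(A).\<close>
definition Q :: "nat \<Rightarrow> (nat \<Rightarrow> nat \<Rightarrow> real) \<Rightarrow> ((nat \<Rightarrow> nat) \<Rightarrow> (nat \<Rightarrow> real) pmf)
                  \<Rightarrow> nat \<Rightarrow> real \<Rightarrow> real \<Rightarrow> real" where
  "Q n W \<phi> i th x =
     measure_pmf.expectation (joint n \<phi>)
       (\<lambda>(t, s). indicator (sig_event i th) (t, s) *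
                 (x + (\<Sum>v'\<in>{..<n} - {t i}. W (t i) v' * s v')))
     / measure_pmf.prob (joint n \<phi>) (sig_event i th)"

definition persuasive :: "nat \<Rightarrow> (nat \<Rightarrow> nat \<Rightarrow> real) \<Rightarrow> real set
                           \<Rightarrow> ((nat \<Rightarrow> nat) \<Rightarrow> (nat \<Rightarrow> real) pmf) \<Rightarrow> bool" where
  "persuasive n W Sig \<phi> \<longleftrightarrow>
     (\<forall>i<n. \<forall>th\<in>Sig. measure_pmf.prob (joint n \<phi>) (sig_event i th) > 0 \<longrightarrow>
        Q n W \<phi> i th th \<ge> 1 \<and> th = (LEAST x. x \<ge> 0 \<and> Q n W \<phi> i th x \<ge> 1))"

definition cost :: "nat \<Rightarrow> ((nat \<Rightarrow> nat) \<Rightarrow> (nat \<Rightarrow> real) pmf) \<Rightarrow> real" where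
  "cost n \<phi> = measure_pmf.expectation (joint n \<phi>) (\<lambda>(t, s). \<Sum>v<n. \<bar>s v\<bar>)"

end

theory Submission
  imports Defs
begin

(*
  For a signal th let G_th(s) be the sum, over the vertices v with s_v = th, of the slack
  s_v + (sum over u ~= v of W_vu s_u) - 1.  Persuasiveness makes every signal the least best
  response to the conditional expectation of the others' contribution; summed over the agents
  this gives E[G_th] >= 0, with equality whenever th > 0.

  The graph consists of two hubs joined to every vertex and M disjoint 5-cliques, all edges of
  weight 1/2; putting 1 on the two hubs shows OPT^IR <= 2.  Let a < b be the two signals.  If
  a >= 1/20, every vertex pays at least a.  Otherwise every s in {a,b}^V satisfies
  sum s - G_b(s)/8 - 3 G_a(s)/8 >= M/10 - 2 if b <= 6/7, and 3 G_b(s) - G_a(s) >= 1/8 if b > 6/7.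
  Taking expectations yields cost >= M/10 - 2 in the first case and a contradiction in the
  second.  Both inequalities split into a hub term plus one term per clique that only depends on
  the hub signals and the number of b's in the clique, so they reduce to finitely many
  polynomial inequalities in a and b.
*)

section \<open>Persuasiveness in terms of slacks\<close>

definition slack :: "nat \<Rightarrow> (nat \<Rightarrow> nat \<Rightarrow> real) \<Rightarrow> (nat \<Rightarrow> real) \<Rightarrow> nat \<Rightarrow> real" where
  "slack n W s v = s v + (\<Sum>u\<in>{..<n} - {v}. W v u * s u) - 1"

definition signal_slack :: "nat \<Rightarrow> (nat \<Rightarrow> nat \<Rightarrow> real) \<Rightarrow> real \<Rightarrow> (nat \<Rightarrow> real) \<Rightarrow> real" where
  "signal_slack n W th s = (\<Sum>v<n. if s v = th then slack n W s v else 0)"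

lemma set_pmf_joint:
  assumes "signaling_scheme n Sig \<phi>"
  shows "set_pmf (joint n \<phi>) \<subseteq> profiles n \<times> PiE {..<n} (\<lambda>_. Sig)"
proof -
  have "finite (profiles n)" "profiles n \<noteq> {}"
    unfolding profiles_def using finite_permutations permutes_id by blast+
  then show ?thesis
    using assms unfolding joint_def signaling_scheme_def by auto
qed

lemma finite_set_pmf_joint:
  assumes "signaling_scheme n Sig \<phi>"
  shows "finite (set_pmf (joint n \<phi>))"
proof (rule finite_subset[OF set_pmf_joint[OF assms]])
  show "finite (profiles n \<times> PiE {..<n} (\<lambda>_. Sig))"
    using assms unfolding profiles_def signaling_scheme_def
    by (intro finite_cartesian_product finite_PiE finite_permutations) auto
qed

lemma cost_eq_expected_total_signal:
  assumes "signaling_scheme n Sig \<phi>"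
  shows "cost n \<phi> = measure_pmf.expectation (joint n \<phi>) (\<lambda>(t, s). \<Sum>v<n. s v)"
proof -
  have "0 \<le> s v" if "(t, s) \<in> set_pmf (joint n \<phi>)" "v < n" for t s v
  proof -
    have "s \<in> PiE {..<n} (\<lambda>_. Sig)"
      using set_pmf_joint[OF assms] that(1) by blast
    then have "s v \<in> Sig"
      using that(2) by (simp add: PiE_iff)
    then show ?thesis
      using assms by (auto simp: signaling_scheme_def)
  qed
  then show ?thesis
    unfolding cost_def by (intro integral_cong_AE AE_pmfI) (auto intro!: sum.cong)
qed

lemma Q_eq_conditional_slack:
  fixes W :: "nat \<Rightarrow> nat \<Rightarrow> real" and i :: nat and th :: real
  defines "A \<equiv> sig_event i th"
  assumes fin: "finite (set_pmf (joint n \<phi>))" and pos: "measure_pmf.prob (joint n \<phi>) A > 0"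
  shows "Q n W \<phi> i th x = x + 1 - th +
           measure_pmf.expectation (joint n \<phi>) (\<lambda>(t, s). indicator A (t, s) * slack n W s (t i))
           / measure_pmf.prob (joint n \<phi>) A"
proof -
  let ?J = "joint n \<phi>"
  let ?Y = "measure_pmf.expectation ?J (\<lambda>(t, s). indicator A (t, s) * slack n W s (t i))"
  note int = integrable_measure_pmf_finite[OF fin]
  have "(\<lambda>(t, s). indicator A (t, s) * (x + (\<Sum>v'\<in>{..<n} - {t i}. W (t i) v' * s v')))
      = (\<lambda>z. (\<lambda>(t, s). indicator A (t, s) * slack n W s (t i)) z + (x + 1 - th) * indicator A z)"
    by (auto simp: A_def sig_event_def slack_def indicator_def fun_eq_iff)
  then have "measure_pmf.expectation ?J
      (\<lambda>(t, s). indicator A (t, s) * (x + (\<Sum>v'\<in>{..<n} - {t i}. W (t i) v' * s v')))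
      = ?Y + (x + 1 - th) * measure_pmf.prob ?J A"
    by (simp add: int)
  then show ?thesis
    using pos unfolding Q_def A_def by (simp add: field_simps)
qed

lemma persuasive_expected_agent_slack:
  fixes W :: "nat \<Rightarrow> nat \<Rightarrow> real" and i :: nat and th :: real
    and n :: nat and \<phi> :: "(nat \<Rightarrow> nat) \<Rightarrow> (nat \<Rightarrow> real) pmf"
  defines "Y \<equiv> measure_pmf.expectation (joint n \<phi>)
                 (\<lambda>(t, s). indicator (sig_event i th) (t, s) * slack n W s (t i))"
  assumes sch: "signaling_scheme n Sig \<phi>" and pers: "persuasive n W Sig \<phi>"
    and "i < n" "th \<in> Sig"
  shows "0 \<le> Y \<and> (0 < th \<longrightarrow> Y = 0)"
proof (cases "measure_pmf.prob (joint n \<phi>) (sig_event i th) = 0")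
  case True
  then have "Y = 0"
    unfolding Y_def measure_pmf_zero_iff
    by (intro integral_eq_zero_AE AE_pmfI) (auto simp: indicator_def)
  then show ?thesis by simp
next
  case False
  define p where "p = measure_pmf.prob (joint n \<phi>) (sig_event i th)"
  have p: "0 < p" using False unfolding p_def by (simp add: zero_less_measure_iff)
  have Q: "Q n W \<phi> i th x = x + 1 - th + Y / p" for x
    unfolding Y_def p_def using finite_set_pmf_joint[OF sch] p[unfolded p_def]
    by (rule Q_eq_conditional_slack)
  have agent: "1 \<le> Q n W \<phi> i th th" "th = (LEAST x. 0 \<le> x \<and> 1 \<le> Q n W \<phi> i th x)"
    using pers p \<open>i < n\<close> \<open>th \<in> Sig\<close> unfolding persuasive_def p_def by auto
  have "(LEAST x. 0 \<le> x \<and> 1 \<le> Q n W \<phi> i th x) = max 0 (th - Y / p)"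
    unfolding Q by (rule Least_equality) auto
  then have "0 < th \<Longrightarrow> Y / p = 0"
    using agent(2) by linarith
  moreover have "0 \<le> Y / p"
    using agent(1) unfolding Q by simp
  ultimately show ?thesis
    using p by (simp add: zero_le_divide_iff)
qed

lemma persuasive_expected_signal_slack:
  fixes W :: "nat \<Rightarrow> nat \<Rightarrow> real" and th :: real
    and n :: nat and \<phi> :: "(nat \<Rightarrow> nat) \<Rightarrow> (nat \<Rightarrow> real) pmf"
  defines "E \<equiv> measure_pmf.expectation (joint n \<phi>) (\<lambda>(t, s). signal_slack n W th s)"
  assumes sch: "signaling_scheme n Sig \<phi>" and pers: "persuasive n W Sig \<phi>" and "th \<in> Sig"
  shows "0 \<le> E \<and> (0 < th \<longrightarrow> E = 0)"
proof -
  let ?J = "joint n \<phi>"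
  define Y where "Y i = measure_pmf.expectation ?J
      (\<lambda>(t, s). indicator (sig_event i th) (t, s) * slack n W s (t i))" for i
  have reindex: "signal_slack n W th s =
      (\<Sum>i<n. indicator (sig_event i th) (t, s) * slack n W s (t i))"
    if "(t, s) \<in> set_pmf ?J" for t s
  proof -
    have "bij_betw t {..<n} {..<n}"
      using set_pmf_joint[OF sch] that by (auto simp: profiles_def permutes_imp_bij)
    then have "signal_slack n W th s = (\<Sum>i<n. if s (t i) = th then slack n W s (t i) else 0)"
      unfolding signal_slack_def by (rule sum.reindex_bij_betw[symmetric])
    also have "\<dots> = (\<Sum>i<n. indicator (sig_event i th) (t, s) * slack n W s (t i))"
      by (intro sum.cong) (auto simp: sig_event_def)
    finally show ?thesis .
  qed
  have "E = measure_pmf.expectation ?J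
      (\<lambda>(t, s). \<Sum>i<n. indicator (sig_event i th) (t, s) * slack n W s (t i))"
    unfolding E_def by (intro integral_cong_AE AE_pmfI) (auto simp: reindex)
  also have "\<dots> = (\<Sum>i<n. Y i)"
    unfolding Y_def case_prod_unfold
    by (rule Bochner_Integration.integral_sum)
       (rule integrable_measure_pmf_finite[OF finite_set_pmf_joint[OF sch]])
  finally have E: "E = (\<Sum>i<n. Y i)" .
  have "0 \<le> Y i \<and> (0 < th \<longrightarrow> Y i = 0)" if "i < n" for i
    unfolding Y_def using sch pers that \<open>th \<in> Sig\<close> by (rule persuasive_expected_agent_slack)
  then show ?thesis
    unfolding E by (auto intro: sum_nonneg)
qed

section \<open>The hub-and-clique graph\<close>

text \<open>Vertices 0 and 1 are hubs adjacent to every vertex; for each c the vertices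
  2 + 5c, ..., 2 + 5c + 4 form a clique.\<close>

definition hub_clique_W :: "nat \<Rightarrow> nat \<Rightarrow> real" where
  "hub_clique_W u v =
     (if u = v then 1 else if u < 2 \<or> v < 2 \<or> (u - 2) div 5 = (v - 2) div 5 then 1/2 else 0)"

lemma weighted_graph_hub_clique_W: "weighted_graph n hub_clique_W"
  unfolding weighted_graph_def hub_clique_W_def by auto

lemma half_edge_weights_hub_clique_W: "half_edge_weights n hub_clique_W"
  unfolding half_edge_weights_def hub_clique_W_def by auto

lemma sum_hubs_cliques:
  fixes f :: "nat \<Rightarrow> 'a::comm_monoid_add"
  shows "(\<Sum>v<2 + 5 * M. f v) = f 0 + f 1 + (\<Sum>c<M. \<Sum>j<5. f (2 + 5 * c + j))"
proof -
  have "(\<Sum>v<2 + 5 * M. f v) = f 0 + f 1 + (\<Sum>v<M * 5. f (Suc (Suc v)))"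
    using sum.lessThan_Suc_shift[of f "Suc (5 * M)"]
      sum.lessThan_Suc_shift[of "\<lambda>i. f (Suc i)" "5 * M"]
    by (simp add: mult.commute add.assoc)
  also have "(\<Sum>v<M * 5. f (Suc (Suc v))) = (\<Sum>c<M. \<Sum>v\<in>{c * 5..<c * 5 + 5}. f (Suc (Suc v)))"
    by (rule sum.nat_group[symmetric])
  also have "\<dots> = (\<Sum>c<M. \<Sum>j<5. f (2 + 5 * c + j))"
  proof (rule sum.cong[OF refl])
    fix c
    have "(\<Sum>v\<in>{c * 5..<c * 5 + 5}. f (Suc (Suc v))) = (\<Sum>v\<in>{0 + c * 5..<5 + c * 5}. f (Suc (Suc v)))"
      by (simp add: add.commute)
    also have "\<dots> = (\<Sum>j<5. f (2 + 5 * c + j))"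
      unfolding sum.shift_bounds_nat_ivl by (simp add: atLeast0LessThan algebra_simps)
    finally show "(\<Sum>v\<in>{c * 5..<c * 5 + 5}. f (Suc (Suc v))) = (\<Sum>j<5. f (2 + 5 * c + j))" .
  qed
  finally show ?thesis .
qed

lemma OPT_IR_le_sum:
  assumes "\<forall>v<n. \<theta> v \<in> {0..1}" "feasible n W \<theta>"
  shows "OPT_IR n W \<le> (\<Sum>v<n. \<theta> v)"
  unfolding OPT_IR_def
proof (rule cInf_lower)
  show "(\<Sum>v<n. \<theta> v) \<in> {(\<Sum>v<n. \<theta> v) | \<theta>. (\<forall>v<n. \<theta> v \<in> {0..1}) \<and> feasible n W \<theta>}"
    using assms by blast
  show "bdd_below {(\<Sum>v<n. \<theta> v) | \<theta>. (\<forall>v<n. \<theta> v \<in> {0..1}) \<and> feasible n W \<theta>}"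
    by (rule bdd_belowI[of _ 0]) (auto intro!: sum_nonneg)
qed

lemma OPT_IR_hub_clique_W_le: "OPT_IR (2 + 5 * M) hub_clique_W \<le> 2"
proof -
  define \<theta> where "\<theta> v = (if v < 2 then 1 else 0 :: real)" for v :: nat
  have "(\<Sum>v<2 + 5 * M. hub_clique_W u v * \<theta> v) = hub_clique_W u 0 + hub_clique_W u 1" for u
    unfolding sum_hubs_cliques by (simp add: \<theta>_def)
  then have feasible: "feasible (2 + 5 * M) hub_clique_W \<theta>"
    unfolding feasible_def by (auto simp: \<theta>_def hub_clique_W_def)
  have "OPT_IR (2 + 5 * M) hub_clique_W \<le> (\<Sum>v<2 + 5 * M. \<theta> v)"
    by (rule OPT_IR_le_sum[OF _ feasible]) (simp add: \<theta>_def)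
  also have "(\<Sum>v<2 + 5 * M. \<theta> v) = 2"
    unfolding sum_hubs_cliques by (simp add: \<theta>_def)
  finally show ?thesis .
qed

definition clique_sum :: "(nat \<Rightarrow> real) \<Rightarrow> nat \<Rightarrow> real" where
  "clique_sum s c = (\<Sum>j<5. s (2 + 5 * c + j))"

lemma slack_hub_clique_W:
  assumes "v < n"
  shows "slack n hub_clique_W s v = s v / 2 +
           (\<Sum>u<n. if u < 2 \<or> v < 2 \<or> (u - 2) div 5 = (v - 2) div 5 then s u else 0) / 2 - 1"
proof -
  have "hub_clique_W v v = 1"
    by (simp add: hub_clique_W_def)
  then have "slack n hub_clique_W s v = (\<Sum>u<n. hub_clique_W v u * s u) - 1"
    unfolding slack_def using assms by (simp add: sum_diff1)
  also have "(\<Sum>u<n. hub_clique_W v u * s u) = (\<Sum>u<n. (if u = v then s u / 2 else 0) +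
      (if u < 2 \<or> v < 2 \<or> (u - 2) div 5 = (v - 2) div 5 then s u else 0) / 2)"
    by (intro sum.cong) (auto simp: hub_clique_W_def)
  also have "\<dots> = s v / 2 +
      (\<Sum>u<n. if u < 2 \<or> v < 2 \<or> (u - 2) div 5 = (v - 2) div 5 then s u else 0) / 2"
    using assms by (simp add: sum.distrib sum_divide_distrib)
  finally show ?thesis .
qed

lemma slack_hub_clique_W_hub:
  assumes "v < 2"
  shows "slack (2 + 5 * M) hub_clique_W s v = s v / 2 + (s 0 + s 1 + (\<Sum>c<M. clique_sum s c)) / 2 - 1"
  using assms slack_hub_clique_W[of v "2 + 5 * M" s, unfolded sum_hubs_cliques]
  by (simp add: clique_sum_def)

lemma slack_hub_clique_W_leaf:
  assumes "c < M" "j < 5"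
  shows "slack (2 + 5 * M) hub_clique_W s (2 + 5 * c + j)
           = s (2 + 5 * c + j) / 2 + (s 0 + s 1 + clique_sum s c) / 2 - 1"
proof -
  have "(\<Sum>c'<M. \<Sum>j'<5. if (2 + 5 * c' + j' - 2) div 5 = (2 + 5 * c + j - 2) div 5
                            then s (2 + 5 * c' + j') else 0)
      = (\<Sum>c'<M. if c' = c then clique_sum s c' else 0)"
    using assms(2) by (intro sum.cong) (auto simp: clique_sum_def)
  also have "\<dots> = clique_sum s c"
    using assms(1) by simp
  finally show ?thesis
    using slack_hub_clique_W[of "2 + 5 * c + j" "2 + 5 * M" s, unfolded sum_hubs_cliques] assms
    by simp
qed

section \<open>Binary schemes on the hub-and-clique graph\<close>

text \<open>For s with values in {a, b}, the combination z (sum s) - l G_b(s) - m G_a(s) equals the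
  sum over v of z s_v - w(s_v) slack_v, where w(b) = l and w(a) = m.  It is split into a hub
  term and one term per clique; the hubs' slacks contain all clique sums, and that part is moved
  into the clique terms.\<close>

definition hub_term :: "real \<Rightarrow> real \<Rightarrow> real \<Rightarrow> real \<Rightarrow> real \<Rightarrow> real \<Rightarrow> real" where
  "hub_term z l m b y0 y1 = (let w = \<lambda>y. if y = b then l else m in
     z * (y0 + y1) - w y0 * (y0 / 2 + (y0 + y1) / 2 - 1) - w y1 * (y1 / 2 + (y0 + y1) / 2 - 1))"

definition clique_term :: "real \<Rightarrow> real \<Rightarrow> real \<Rightarrow> real \<Rightarrow> real \<Rightarrow> real \<Rightarrow> (nat \<Rightarrow> real) \<Rightarrow> real" where
  "clique_term z l m b y0 y1 x = (let w = \<lambda>y. if y = b then l else m; T = (\<Sum>j<5. x j) in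
     (\<Sum>j<5. z * x j - w (x j) * (x j / 2 + (y0 + y1 + T) / 2 - 1)) - (w y0 + w y1) / 2 * T)"

lemma slack_combination_hub_clique_W:
  assumes "\<And>v. v < 2 + 5 * M \<Longrightarrow> s v = a \<or> s v = b" "a \<noteq> b"
  shows "z * (\<Sum>v<2 + 5 * M. s v) - l * signal_slack (2 + 5 * M) hub_clique_W b s
           - m * signal_slack (2 + 5 * M) hub_clique_W a s
         = hub_term z l m b (s 0) (s 1)
           + (\<Sum>c<M. clique_term z l m b (s 0) (s 1) (\<lambda>j. s (2 + 5 * c + j)))"
proof -
  let ?n = "2 + 5 * M"
  let ?w = "\<lambda>y. if y = b then l else m"
  let ?g = "slack ?n hub_clique_W s"
  let ?leaf = "\<lambda>c j. z * s (2 + 5 * c + j) -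
      ?w (s (2 + 5 * c + j)) * (s (2 + 5 * c + j) / 2 + (s 0 + s 1 + clique_sum s c) / 2 - 1)"
  have "z * (\<Sum>v<?n. s v) - l * signal_slack ?n hub_clique_W b s - m * signal_slack ?n hub_clique_W a s
      = (\<Sum>v<?n. z * s v - l * (if s v = b then ?g v else 0) - m * (if s v = a then ?g v else 0))"
    unfolding signal_slack_def by (simp only: sum_subtractf sum_distrib_left)
  also have "\<dots> = (\<Sum>v<?n. z * s v - ?w (s v) * ?g v)"
    using assms by (intro sum.cong) auto
  also have "\<dots> = z * s 0 - ?w (s 0) * ?g 0 + (z * s 1 - ?w (s 1) * ?g 1)
      + (\<Sum>c<M. \<Sum>j<5. z * s (2 + 5 * c + j) - ?w (s (2 + 5 * c + j)) * ?g (2 + 5 * c + j))"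
    by (rule sum_hubs_cliques)
  also have "(\<Sum>c<M. \<Sum>j<5. z * s (2 + 5 * c + j) - ?w (s (2 + 5 * c + j)) * ?g (2 + 5 * c + j))
      = (\<Sum>c<M. \<Sum>j<5. ?leaf c j)"
    by (intro sum.cong refl) (simp only: lessThan_iff slack_hub_clique_W_leaf)
  also have "(\<Sum>c<M. \<Sum>j<5. ?leaf c j) = (\<Sum>c<M. clique_term z l m b (s 0) (s 1) (\<lambda>j. s (2 + 5 * c + j)))
      + (?w (s 0) + ?w (s 1)) / 2 * (\<Sum>c<M. clique_sum s c)"
  proof -
    have "clique_term z l m b (s 0) (s 1) (\<lambda>j. s (2 + 5 * c + j))
        = (\<Sum>j<5. ?leaf c j) - (?w (s 0) + ?w (s 1)) / 2 * clique_sum s c" for c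
      unfolding clique_term_def clique_sum_def Let_def by (rule refl)
    then show ?thesis
      by (simp only: sum_subtractf sum_distrib_left diff_add_cancel)
  qed
  also have "z * s 0 - ?w (s 0) * ?g 0 + (z * s 1 - ?w (s 1) * ?g 1)
      + ((\<Sum>c<M. clique_term z l m b (s 0) (s 1) (\<lambda>j. s (2 + 5 * c + j)))
         + (?w (s 0) + ?w (s 1)) / 2 * (\<Sum>c<M. clique_sum s c))
      = hub_term z l m b (s 0) (s 1)
        + (\<Sum>c<M. clique_term z l m b (s 0) (s 1) (\<lambda>j. s (2 + 5 * c + j)))"
  proof -
    have hubs: "?g 0 = s 0 / 2 + (s 0 + s 1 + (\<Sum>c<M. clique_sum s c)) / 2 - 1"
         "?g 1 = s 1 / 2 + (s 0 + s 1 + (\<Sum>c<M. clique_sum s c)) / 2 - 1"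
      by (rule slack_hub_clique_W_hub, simp)+
    show ?thesis
      unfolding hubs hub_term_def Let_def by (simp add: algebra_simps add_divide_distrib)
  qed
  finally show ?thesis .
qed

lemma sum_two_valued:
  fixes f :: "'a \<Rightarrow> 'b::comm_ring_1"
  assumes "finite I" "\<forall>j\<in>I. x j = a \<or> x j = b"
  shows "(\<Sum>j\<in>I. f (x j)) = of_nat (card {j\<in>I. x j = b}) * f b
           + (of_nat (card I) - of_nat (card {j\<in>I. x j = b})) * f a"
proof -
  have "(\<Sum>j\<in>I. f (x j)) = (\<Sum>j\<in>I. if x j = b then f b else f a)"
    using assms(2) by (intro sum.cong) auto
  also have "\<dots> = of_nat (card {j\<in>I. x j = b}) * f b + of_nat (card (I - {j\<in>I. x j = b})) * f a"
  proof -
    have "I \<inter> {j. x j = b} = {j\<in>I. x j = b}" "I \<inter> - {j. x j = b} = I - {j\<in>I. x j = b}"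
      by auto
    then show ?thesis
      using sum.If_cases[OF assms(1), of "\<lambda>j. x j = b" "\<lambda>_. f b" "\<lambda>_. f a"] by simp
  qed
  finally show ?thesis
    using assms(1) by (simp add: card_Diff_subset card_mono of_nat_diff)
qed

definition clique_count_term ::
    "real \<Rightarrow> real \<Rightarrow> real \<Rightarrow> real \<Rightarrow> real \<Rightarrow> real \<Rightarrow> real \<Rightarrow> real \<Rightarrow> real" where
  "clique_count_term z l m a b y0 y1 k =
     (let w = \<lambda>y. if y = b then l else m; T = k * b + (5 - k) * a in
        k * (z * b - l * (b / 2 + (y0 + y1 + T) / 2 - 1))
        + (5 - k) * (z * a - m * (a / 2 + (y0 + y1 + T) / 2 - 1)) - (w y0 + w y1) / 2 * T)"

lemma clique_term_eq_count_term:
  fixes a b :: real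
  assumes "\<forall>j<5. x j = a \<or> x j = b" "a \<noteq> b"
  obtains k :: real where "k \<in> {0, 1, 2, 3, 4, 5}"
    "clique_term z l m b y0 y1 x = clique_count_term z l m a b y0 y1 k"
proof
  let ?k = "card {j\<in>{..<5::nat}. x j = b}"
  have "?k \<le> 5"
    using card_mono[of "{..<5::nat}" "{j\<in>{..<5}. x j = b}"] by auto
  then show "real ?k \<in> {0, 1, 2, 3, 4, 5}"
    by (simp add: le_Suc_eq eval_nat_numeral)
  let ?w = "\<lambda>y. if y = b then l else m"
  have ball: "\<forall>j\<in>{..<5}. x j = a \<or> x j = b"
    using assms(1) by auto
  have T: "(\<Sum>j<5. x j) = real ?k * b + (5 - real ?k) * a"
    using sum_two_valued[OF _ ball, of "\<lambda>y. y"] by simp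
  show "clique_term z l m b y0 y1 x = clique_count_term z l m a b y0 y1 ?k"
    using sum_two_valued[OF _ ball, of "\<lambda>y. z * y - ?w y * (y / 2 + (y0 + y1 + (\<Sum>j<5. x j)) / 2 - 1)"]
      assms(2)
    unfolding clique_term_def clique_count_term_def Let_def T by simp
qed

lemma clique_count_term_low_b:
  assumes "k \<in> {0, 1, 2, 3, 4, 5}" "y0 = a \<or> y0 = b" "y1 = a \<or> y1 = b" "a \<noteq> b"
    and "0 \<le> a" "a \<le> 1/20" "0 \<le> b" "b \<le> 6/7"
  shows "1/10 \<le> clique_count_term 1 (1/8) (3/8) a b y0 y1 k"
  using assms by (auto simp: clique_count_term_def Let_def field_simps)

lemma clique_count_term_high_b:
  assumes "k \<in> {0, 1, 2, 3, 4, 5}" "y0 = a \<or> y0 = b" "y1 = a \<or> y1 = b" "a \<noteq> b"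
    and "0 \<le> a" "a \<le> 1/20" "6/7 \<le> b" "b \<le> 1"
  shows "0 \<le> clique_count_term 0 (-3) 1 a b y0 y1 k"
  using assms by (auto simp: clique_count_term_def Let_def field_simps)

lemma hub_term_low_b:
  assumes "y0 = a \<or> y0 = b" "y1 = a \<or> y1 = b" "a \<noteq> b" "0 \<le> a" "a \<le> 1/20" "0 \<le> b" "b \<le> 1"
  shows "-2 \<le> hub_term 1 (1/8) (3/8) b y0 y1"
  using assms by (auto simp: hub_term_def field_simps)

lemma hub_term_high_b:
  assumes "y0 = a \<or> y0 = b" "y1 = a \<or> y1 = b" "a \<noteq> b" "0 \<le> a" "a \<le> 1/20" "6/7 \<le> b" "b \<le> 1"
  shows "1/8 \<le> hub_term 0 (-3) 1 b y0 y1"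
  using assms by (auto simp: hub_term_def field_simps)

lemma slack_combination_low_b:
  assumes sv: "\<And>v. v < 2 + 5 * M \<Longrightarrow> s v = a \<or> s v = b"
    and "a \<noteq> b" "0 \<le> a" "a \<le> 1/20" "0 \<le> b" "b \<le> 6/7"
  shows "real M / 10 - 2 \<le> (\<Sum>v<2 + 5 * M. s v) - 1/8 * signal_slack (2 + 5 * M) hub_clique_W b s
                                - 3/8 * signal_slack (2 + 5 * M) hub_clique_W a s"
proof -
  have hub: "-2 \<le> hub_term 1 (1/8) (3/8) b (s 0) (s 1)"
    by (rule hub_term_low_b[OF sv sv]) (use assms(2-) in auto)
  have "1/10 \<le> clique_term 1 (1/8) (3/8) b (s 0) (s 1) (\<lambda>j. s (2 + 5 * c + j))" if "c < M" for c
  proof -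
    have "\<forall>j<5. s (2 + 5 * c + j) = a \<or> s (2 + 5 * c + j) = b"
      using that by (intro allI impI sv) linarith
    then obtain k where "k \<in> {0, 1, 2, 3, 4, 5}" and eq:
        "clique_term 1 (1/8) (3/8) b (s 0) (s 1) (\<lambda>j. s (2 + 5 * c + j))
         = clique_count_term 1 (1/8) (3/8) a b (s 0) (s 1) k"
      using \<open>a \<noteq> b\<close> by (rule clique_term_eq_count_term)
    show ?thesis
      unfolding eq by (rule clique_count_term_low_b[OF \<open>k \<in> _\<close> sv sv]) (use assms(2-) in auto)
  qed
  then have "(\<Sum>c<M. 1/10) \<le> (\<Sum>c<M. clique_term 1 (1/8) (3/8) b (s 0) (s 1) (\<lambda>j. s (2 + 5 * c + j)))"
    by (intro sum_mono) auto
  moreover have "1 * (\<Sum>v<2 + 5 * M. s v) - 1/8 * signal_slack (2 + 5 * M) hub_clique_W b s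
                  - 3/8 * signal_slack (2 + 5 * M) hub_clique_W a s
      = hub_term 1 (1/8) (3/8) b (s 0) (s 1)
        + (\<Sum>c<M. clique_term 1 (1/8) (3/8) b (s 0) (s 1) (\<lambda>j. s (2 + 5 * c + j)))"
    by (rule slack_combination_hub_clique_W[OF sv \<open>a \<noteq> b\<close>])
  moreover have "(\<Sum>c<M. (1/10::real)) = real M / 10"
    by simp
  ultimately show ?thesis
    using hub by linarith
qed

lemma slack_combination_high_b:
  assumes sv: "\<And>v. v < 2 + 5 * M \<Longrightarrow> s v = a \<or> s v = b"
    and "a \<noteq> b" "0 \<le> a" "a \<le> 1/20" "6/7 \<le> b" "b \<le> 1"
  shows "1/8 \<le> 3 * signal_slack (2 + 5 * M) hub_clique_W b s
                  - signal_slack (2 + 5 * M) hub_clique_W a s"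
proof -
  have hub: "1/8 \<le> hub_term 0 (-3) 1 b (s 0) (s 1)"
    by (rule hub_term_high_b[OF sv sv]) (use assms(2-) in auto)
  have "0 \<le> clique_term 0 (-3) 1 b (s 0) (s 1) (\<lambda>j. s (2 + 5 * c + j))" if "c < M" for c
  proof -
    have "\<forall>j<5. s (2 + 5 * c + j) = a \<or> s (2 + 5 * c + j) = b"
      using that by (intro allI impI sv) linarith
    then obtain k where "k \<in> {0, 1, 2, 3, 4, 5}" and eq:
        "clique_term 0 (-3) 1 b (s 0) (s 1) (\<lambda>j. s (2 + 5 * c + j))
         = clique_count_term 0 (-3) 1 a b (s 0) (s 1) k"
      using \<open>a \<noteq> b\<close> by (rule clique_term_eq_count_term)
    show ?thesis
      unfolding eq by (rule clique_count_term_high_b[OF \<open>k \<in> _\<close> sv sv]) (use assms(2-) in auto)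
  qed
  then have "0 \<le> (\<Sum>c<M. clique_term 0 (-3) 1 b (s 0) (s 1) (\<lambda>j. s (2 + 5 * c + j)))"
    by (intro sum_nonneg) auto
  moreover have "0 * (\<Sum>v<2 + 5 * M. s v) - (-3) * signal_slack (2 + 5 * M) hub_clique_W b s
                  - 1 * signal_slack (2 + 5 * M) hub_clique_W a s
      = hub_term 0 (-3) 1 b (s 0) (s 1)
        + (\<Sum>c<M. clique_term 0 (-3) 1 b (s 0) (s 1) (\<lambda>j. s (2 + 5 * c + j)))"
    by (rule slack_combination_hub_clique_W[OF sv \<open>a \<noteq> b\<close>])
  ultimately show ?thesis
    using hub by linarith
qed

lemma cost_hub_clique_W_lower_bound:
  assumes sch: "signaling_scheme (2 + 5 * M) Sig \<phi>" and "binary Sig"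
    and pers: "persuasive (2 + 5 * M) hub_clique_W Sig \<phi>" and "50 \<le> M"
  shows "real (2 + 5 * M) / 100 \<le> cost (2 + 5 * M) \<phi>"
proof -
  let ?n = "2 + 5 * M"
  let ?J = "joint ?n \<phi>"
  define E where "E f = measure_pmf.expectation ?J (\<lambda>(t, s). f s)" for f :: "(nat \<Rightarrow> real) \<Rightarrow> real"
  obtain a b where Sig: "Sig = {a, b}" and "a < b"
  proof -
    obtain x y where "Sig = {x, y}" "x \<noteq> y"
      using \<open>binary Sig\<close> unfolding binary_def by (auto simp: card_2_iff)
    then show ?thesis
      using that by (metis insert_commute linorder_neq_iff)
  qed
  have "0 \<le> a" "b \<le> 1"
    using sch Sig unfolding signaling_scheme_def by auto
  have two_signals: "s v = a \<or> s v = b" if "(t, s) \<in> set_pmf ?J" "v < ?n" for t s v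
    using set_pmf_joint[OF sch] that Sig by (auto simp: PiE_iff)
  note int = integrable_measure_pmf_finite[OF finite_set_pmf_joint[OF sch]]
  have E_ge: "c \<le> E f" if "\<And>t s. (t, s) \<in> set_pmf ?J \<Longrightarrow> c \<le> f s" for c f
    unfolding E_def using that by (intro measure_pmf.integral_ge_const int AE_pmfI) auto
  have E_lin: "E (\<lambda>s. f s - c * g s - d * h s) = E f - c * E g - d * E h" for f g h c d
    unfolding E_def case_prod_unfold
    by (simp only: Bochner_Integration.integral_diff[OF int int] integral_mult_right_zero)
  have cost: "cost ?n \<phi> = E (\<lambda>s. \<Sum>v<?n. s v)"
    unfolding E_def by (rule cost_eq_expected_total_signal[OF sch])
  have slack_a: "0 \<le> E (signal_slack ?n hub_clique_W a)"
    using persuasive_expected_signal_slack[OF sch pers, of a] Sig unfolding E_def by simp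
  have slack_b: "E (signal_slack ?n hub_clique_W b) = 0"
    using persuasive_expected_signal_slack[OF sch pers, of b] Sig \<open>0 \<le> a\<close> \<open>a < b\<close>
    unfolding E_def by simp
  consider "1/20 \<le> a" | "a < 1/20" "b \<le> 6/7" | "a < 1/20" "6/7 < b"
    by linarith
  then show ?thesis
  proof cases
    case 1
    have "real ?n * a \<le> (\<Sum>v<?n. s v)" if "(t, s) \<in> set_pmf ?J" for t s
    proof -
      have "(\<Sum>v<?n. a) \<le> (\<Sum>v<?n. s v)"
      proof (rule sum_mono)
        fix v assume "v \<in> {..<?n}"
        then have "s v = a \<or> s v = b"
          by (intro two_signals[OF that]) simp
        then show "a \<le> s v"
          using \<open>a < b\<close> by auto
      qed
      then show ?thesis by simp
    qed
    then have "real ?n * a \<le> cost ?n \<phi>"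
      unfolding cost by (rule E_ge)
    moreover have "real ?n / 100 \<le> real ?n * a"
      using 1 mult_left_mono[of "1/20" a "real ?n"] by simp
    ultimately show ?thesis by linarith
  next
    case 2
    have "real M / 10 - 2 \<le> (\<Sum>v<?n. s v) - 1/8 * signal_slack ?n hub_clique_W b s
                                - 3/8 * signal_slack ?n hub_clique_W a s"
      if "(t, s) \<in> set_pmf ?J" for t s
      by (rule slack_combination_low_b[OF two_signals[OF that]]) (use 2 \<open>0 \<le> a\<close> \<open>a < b\<close> in auto)
    then have "real M / 10 - 2 \<le> E (\<lambda>s. (\<Sum>v<?n. s v) - 1/8 * signal_slack ?n hub_clique_W b s
                                    - 3/8 * signal_slack ?n hub_clique_W a s)"
      by (rule E_ge)
    then have "real M / 10 - 2 \<le> cost ?n \<phi>"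
      unfolding E_lin cost slack_b using slack_a by linarith
    then show ?thesis
      using \<open>50 \<le> M\<close> by simp
  next
    case 3
    have "1/8 \<le> 0 - (-3) * signal_slack ?n hub_clique_W b s - 1 * signal_slack ?n hub_clique_W a s"
      if "(t, s) \<in> set_pmf ?J" for t s
    proof -
      have "1/8 \<le> 3 * signal_slack ?n hub_clique_W b s - signal_slack ?n hub_clique_W a s"
        by (rule slack_combination_high_b[OF two_signals[OF that]])
           (use 3 \<open>0 \<le> a\<close> \<open>a < b\<close> \<open>b \<le> 1\<close> in auto)
      then show ?thesis by simp
    qed
    then have "1/8 \<le> E (\<lambda>s. 0 - (-3) * signal_slack ?n hub_clique_W b s
                               - 1 * signal_slack ?n hub_clique_W a s)"
      by (rule E_ge)
    moreover have "E (\<lambda>_. 0) = 0"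
      by (simp add: E_def case_prod_unfold)
    ultimately have False
      unfolding E_lin slack_b using slack_a by linarith
    then show ?thesis ..
  qed
qed

theorem theorem8p1:
  shows "\<exists>c::real. c > 0 \<and> (\<exists>C::real. \<forall>N::nat. \<exists>n\<ge>N. \<exists>W.
           weighted_graph n W \<and> half_edge_weights n W \<and> OPT_IR n W \<le> C \<and>
           (\<forall>Sig \<phi>. signaling_scheme n Sig \<phi> \<longrightarrow> binary Sig \<longrightarrow> persuasive n W Sig \<phi>
                \<longrightarrow> cost n \<phi> \<ge> c * real n))"
proof -
  have "\<exists>n\<ge>N. \<exists>W. weighted_graph n W \<and> half_edge_weights n W \<and> OPT_IR n W \<le> 2 \<and>
           (\<forall>Sig \<phi>. signaling_scheme n Sig \<phi> \<longrightarrow> binary Sig \<longrightarrow> persuasive n W Sig \<phi>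
                \<longrightarrow> cost n \<phi> \<ge> 1/100 * real n)" for N :: nat
  proof (intro exI conjI allI impI)
    let ?M = "N + 50"
    show "N \<le> 2 + 5 * ?M"
      by simp
    show "weighted_graph (2 + 5 * ?M) hub_clique_W" "half_edge_weights (2 + 5 * ?M) hub_clique_W"
      by (rule weighted_graph_hub_clique_W half_edge_weights_hub_clique_W)+
    show "OPT_IR (2 + 5 * ?M) hub_clique_W \<le> 2"
      by (rule OPT_IR_hub_clique_W_le)
    fix Sig \<phi>
    assume "signaling_scheme (2 + 5 * ?M) Sig \<phi>" "binary Sig"
      "persuasive (2 + 5 * ?M) hub_clique_W Sig \<phi>"
    from cost_hub_clique_W_lower_bound[OF this]
    show "cost (2 + 5 * ?M) \<phi> \<ge> 1/100 * real (2 + 5 * ?M)"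
      by simp
  qed
  then show ?thesis
    by (intro exI[of _ "1/100::real"] exI[of _ "2::real"] conjI) auto
qed

end
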